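(* Let $\mathcal U$ and $\mathcal V$ be non-commutative domains in $M(\mathbb C)^g$. If $f:\mathcal U\to\mathcal V$ is a free map and each $f[n]:\mathcal U(n)\to\mathcal V(n)$ is bianalytic (a holomorphic bijection with holomorphic inverse), then $f$ is a bianalytic free map, i.e. $f$ and $f^{-1}=(f[n]^{-1})_n:\mathcal V\to\mathcal U$ are both proper analytic free maps.
   Context: $M_n(\mathbb C)^g$ denotes $g$-tuples $X=(X_1,\dots,X_g)$ of $n\times n$ complex matrices; $X\Gamma$, $\Gamma Y$, $U^*XU$, $X\oplus Y$ are defined entrywise (the last block diagonally). A non-commutative set $\mathcal U\subseteq M(\mathbb C)^g$ is a sequence $(\mathcal U(n))_n$, $\mathcal U(n)\subseteq M_n(\mathbb C)^g$, closed under simultaneous unitary similarity $X\mapsto U^*XU$ and under direct sums $X\in\mathcal U(n),Y\in\mathcal U(m)\Rightarrow X\oplus Y\in\mathcal U(n+m)$; it is a non-commutative domain if each $\mathcal U(n)$ is open and connected. A free map $f:\mathcal U\to\mathcal V$ is a sequence of functions $f[n]:\mathcal U(n)\to\mathcal V(n)$ such that whenever $X\in\mathcal U(n)$, $Y\in\mathcal U(m)$, $\Gamma\in\mathbb C^{n\times m}$ with $X\Gamma=\Gamma Y$, then $f[n](X)\Gamma=\Gamma f[m](Y)$. An analytic free map is a free map with each $f[n]$ holomorphic; it is proper if each $f[n]:\mathcal U(n)\to\mathcal V(n)$ is proper (preimages of compact sets are compact). *)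

theory Defs
  imports "HOL-Analysis.Analysis"
begin

text \<open>A g-tuple X = (X_1,...,X_g) of n x n complex matrices is encoded as a function
  X :: nat => nat => nat => complex, where X i j k is the (j,k) entry of X_(i+1)
  (indices i < g, j < n, k < n, 0-based), and X vanishes outside this box.
  The function type carries the product topology (HOL-Analysis.Function_Topology);
  restricted to the finite-dimensional space of such tuples it is the Euclidean topology.\<close>

type_synonym mtuple = "nat \<Rightarrow> nat \<Rightarrow> nat \<Rightarrow> complex"

definition mspace :: "nat \<Rightarrow> nat \<Rightarrow> mtuple set" where
  "mspace g n = {X. \<forall>i j k. \<not> (i < g \<and> j < n \<and> k < n) \<longrightarrow> X i j k = 0}"

definition mnorm :: "nat \<Rightarrow> nat \<Rightarrow> mtuple \<Rightarrow> real" where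
  "mnorm g n X = sqrt (\<Sum>i<g. \<Sum>j<n. \<Sum>k<n. (cmod (X i j k))\<^sup>2)"

definition mdiff :: "mtuple \<Rightarrow> mtuple \<Rightarrow> mtuple" where
  "mdiff X Y = (\<lambda>i j k. X i j k - Y i j k)"

definition mclinear :: "nat \<Rightarrow> nat \<Rightarrow> (mtuple \<Rightarrow> mtuple) \<Rightarrow> bool" where
  "mclinear g n L \<longleftrightarrow> (\<forall>X\<in>mspace g n. L X \<in> mspace g n) \<and>
     (\<forall>a X Y. X \<in> mspace g n \<longrightarrow> Y \<in> mspace g n \<longrightarrow>
        L (\<lambda>i j k. a * X i j k + Y i j k) = (\<lambda>i j k. a * L X i j k + L Y i j k))"

definition mholo_on :: "nat \<Rightarrow> nat \<Rightarrow> (mtuple \<Rightarrow> mtuple) \<Rightarrow> mtuple set \<Rightarrow> bool" where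
  "mholo_on g n F S \<longleftrightarrow> (\<forall>X\<in>S. F X \<in> mspace g n) \<and>
     (\<forall>X\<in>S. \<exists>L. mclinear g n L \<and>
        ((\<lambda>Y. mnorm g n (mdiff (mdiff (F Y) (F X)) (L (mdiff Y X))) / mnorm g n (mdiff Y X))
            \<longlongrightarrow> 0) (at X within S))"

definition unitary_mat :: "nat \<Rightarrow> (nat \<Rightarrow> nat \<Rightarrow> complex) \<Rightarrow> bool" where
  "unitary_mat n W \<longleftrightarrow> (\<forall>a<n. \<forall>b<n. (\<Sum>c<n. cnj (W c a) * W c b) = (if a = b then 1 else 0))"

definition usim :: "nat \<Rightarrow> nat \<Rightarrow> (nat \<Rightarrow> nat \<Rightarrow> complex) \<Rightarrow> mtuple \<Rightarrow> mtuple" where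
  "usim g n W X = (\<lambda>i j k. if i < g \<and> j < n \<and> k < n
      then (\<Sum>a<n. \<Sum>b<n. cnj (W a j) * X i a b * W b k) else 0)"

definition dsum :: "nat \<Rightarrow> mtuple \<Rightarrow> mtuple \<Rightarrow> mtuple" where
  "dsum n X Y = (\<lambda>i j k. if j < n \<and> k < n then X i j k
      else if n \<le> j \<and> n \<le> k then Y i (j - n) (k - n) else 0)"

definition nc_set :: "nat \<Rightarrow> (nat \<Rightarrow> mtuple set) \<Rightarrow> bool" where
  "nc_set g U \<longleftrightarrow>
     (\<forall>n>0. U n \<subseteq> mspace g n) \<and>
     (\<forall>n>0. \<forall>W X. unitary_mat n W \<longrightarrow> X \<in> U n \<longrightarrow> usim g n W X \<in> U n) \<and>
     (\<forall>n>0. \<forall>m>0. \<forall>X Y. X \<in> U n \<longrightarrow> Y \<in> U m \<longrightarrow> dsum n X Y \<in> U (n + m))"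

definition nc_domain :: "nat \<Rightarrow> (nat \<Rightarrow> mtuple set) \<Rightarrow> bool" where
  "nc_domain g U \<longleftrightarrow> nc_set g U \<and>
     (\<forall>n>0. openin (top_of_set (mspace g n)) (U n) \<and> connected (U n))"

definition intertwines :: "nat \<Rightarrow> nat \<Rightarrow> nat \<Rightarrow> mtuple \<Rightarrow> (nat \<Rightarrow> nat \<Rightarrow> complex) \<Rightarrow> mtuple \<Rightarrow> bool" where
  "intertwines g n m X \<Gamma> Y \<longleftrightarrow> (\<forall>i<g. \<forall>a<n. \<forall>b<m.
      (\<Sum>c<n. X i a c * \<Gamma> c b) = (\<Sum>c<m. \<Gamma> a c * Y i c b))"

definition free_map :: "nat \<Rightarrow> (nat \<Rightarrow> mtuple set) \<Rightarrow> (nat \<Rightarrow> mtuple set) \<Rightarrow> (nat \<Rightarrow> mtuple \<Rightarrow> mtuple) \<Rightarrow> bool" where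
  "free_map g U V f \<longleftrightarrow>
     (\<forall>n>0. \<forall>X\<in>U n. f n X \<in> V n) \<and>
     (\<forall>n>0. \<forall>m>0. \<forall>X\<in>U n. \<forall>Y\<in>U m. \<forall>\<Gamma>.
        intertwines g n m X \<Gamma> Y \<longrightarrow> intertwines g n m (f n X) \<Gamma> (f m Y))"

definition analytic_free_map :: "nat \<Rightarrow> (nat \<Rightarrow> mtuple set) \<Rightarrow> (nat \<Rightarrow> mtuple set) \<Rightarrow> (nat \<Rightarrow> mtuple \<Rightarrow> mtuple) \<Rightarrow> bool" where
  "analytic_free_map g U V f \<longleftrightarrow> free_map g U V f \<and> (\<forall>n>0. mholo_on g n (f n) (U n))"

definition proper_on :: "mtuple set \<Rightarrow> mtuple set \<Rightarrow> (mtuple \<Rightarrow> mtuple) \<Rightarrow> bool" where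
  "proper_on A B F \<longleftrightarrow> (\<forall>K. K \<subseteq> B \<longrightarrow> compact K \<longrightarrow> compact {X\<in>A. F X \<in> K})"

definition proper_analytic_free_map :: "nat \<Rightarrow> (nat \<Rightarrow> mtuple set) \<Rightarrow> (nat \<Rightarrow> mtuple set) \<Rightarrow> (nat \<Rightarrow> mtuple \<Rightarrow> mtuple) \<Rightarrow> bool" where
  "proper_analytic_free_map g U V f \<longleftrightarrow> analytic_free_map g U V f \<and>
     (\<forall>n>0. proper_on (U n) (V n) (f n))"

definition bianalytic_on :: "nat \<Rightarrow> nat \<Rightarrow> mtuple set \<Rightarrow> mtuple set \<Rightarrow> (mtuple \<Rightarrow> mtuple) \<Rightarrow> bool" where
  "bianalytic_on g n A B F \<longleftrightarrow> bij_betw F A B \<and> mholo_on g n F A \<and> mholo_on g n (inv_into A F) B"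

end

theory Submission
  imports Defs
begin

text \<open>Analyticity and properness of f and of its levelwise inverse come for free: holomorphic
  maps are continuous, and a bijection with continuous inverse pulls compacta back to compacta.
  The content is that the inverse again respects intertwinings. Suppose
  f[n](X1) \<Gamma> = \<Gamma> f[m](X2). For small t \<noteq> 0 the tuple
  W = [[X1, t(X1\<Gamma> - \<Gamma>X2)], [0, X2]] lies in the open set U(n+m), and
  (X1 \<oplus> X2) S = S W for the invertible S = [[I, t\<Gamma>], [0, I]]. Hence
  f(X1 \<oplus> X2) S = S f(W); but f(X1 \<oplus> X2) = f(X1) \<oplus> f(X2) commutes with S by
  hypothesis, so f(W) = f(X1 \<oplus> X2). Injectivity of f[n+m] gives W = X1 \<oplus> X2,
  that is X1\<Gamma> = \<Gamma>X2.\<close>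

lemma sum_lessThan_add_split:
  "(\<Sum>c<n + m. h c) = (\<Sum>c<n. h c) + (\<Sum>c<m. h (c + n :: nat))"
  by (induction m) (auto simp: add.commute add.left_commute)

lemma sum_mult_delta_right:
  "(\<Sum>c\<in>A. h c * (if c = b then 1 else 0)) = (if b \<in> A \<and> finite A then h b else (0::'a::semiring_1))"
proof -
  have "(\<Sum>c\<in>A. h c * (if c = b then 1 else 0)) = (\<Sum>c\<in>A. if c = b then h c else 0)"
    by (rule sum.cong) simp_all
  then show ?thesis by (cases "finite A") simp_all
qed

lemma sum_mult_delta_left:
  "(\<Sum>c\<in>A. (if b = c then 1 else 0) * h c) = (if b \<in> A \<and> finite A then h b else (0::'a::semiring_1))"
proof -
  have "(\<Sum>c\<in>A. (if b = c then 1 else 0) * h c) = (\<Sum>c\<in>A. if b = c then h c else 0)"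
    by (rule sum.cong) simp_all
  then show ?thesis by (cases "finite A") simp_all
qed

lemma nc_set_subset_mspace: "nc_set g U \<Longrightarrow> n > 0 \<Longrightarrow> U n \<subseteq> mspace g n"
  unfolding nc_set_def by simp

lemma nc_set_dsum:
  "nc_set g U \<Longrightarrow> n > 0 \<Longrightarrow> m > 0 \<Longrightarrow> X \<in> U n \<Longrightarrow> Y \<in> U m \<Longrightarrow> dsum n X Y \<in> U (n + m)"
  unfolding nc_set_def by simp

lemma free_map_into: "free_map g U V f \<Longrightarrow> n > 0 \<Longrightarrow> X \<in> U n \<Longrightarrow> f n X \<in> V n"
  unfolding free_map_def by simp

lemma free_map_intertwines:
  "free_map g U V f \<Longrightarrow> n > 0 \<Longrightarrow> m > 0 \<Longrightarrow> X \<in> U n \<Longrightarrow> Y \<in> U m \<Longrightarrow>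
    intertwines g n m X \<Gamma> Y \<Longrightarrow> intertwines g n m (f n X) \<Gamma> (f m Y)"
  unfolding free_map_def by simp

section \<open>Block upper triangular tuples\<close>

definition shear_mat :: "nat \<Rightarrow> complex \<Rightarrow> (nat \<Rightarrow> nat \<Rightarrow> complex) \<Rightarrow> nat \<Rightarrow> nat \<Rightarrow> complex" where
  "shear_mat n t \<Gamma> = (\<lambda>a b. (if a = b then 1 else 0) + (if a < n \<and> n \<le> b then t * \<Gamma> a (b - n) else 0))"

lemma shear_mat_mult_left:
  assumes "a < n + m"
  shows "(\<Sum>c<n + m. shear_mat n t \<Gamma> a c * u c) = u a + (if a < n then t * (\<Sum>c<m. \<Gamma> a c * u (c + n)) else 0)"
proof -
  have "(\<Sum>c<n + m. shear_mat n t \<Gamma> a c * u c) = (\<Sum>c<n + m. (if a = c then 1 else 0) * u c) +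
     (\<Sum>c<n + m. (if a < n \<and> n \<le> c then t * \<Gamma> a (c - n) else 0) * u c)"
    unfolding shear_mat_def by (simp add: algebra_simps sum.distrib)
  also have "(\<Sum>c<n + m. (if a = c then 1 else 0) * u c) = u a"
    using assms by (simp add: sum_mult_delta_left)
  also have "(\<Sum>c<n + m. (if a < n \<and> n \<le> c then t * \<Gamma> a (c - n) else 0) * u c)
      = (if a < n then t * (\<Sum>c<m. \<Gamma> a c * u (c + n)) else 0)"
    unfolding sum_lessThan_add_split[of _ n m] by (simp add: sum_distrib_left algebra_simps)
  finally show ?thesis .
qed

lemma shear_mat_mult_right:
  assumes "b < n + m"
  shows "(\<Sum>c<n + m. h c * shear_mat n t \<Gamma> c b) = h b + (if n \<le> b then t * (\<Sum>c<n. h c * \<Gamma> c (b - n)) else 0)"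
proof -
  have "(\<Sum>c<n + m. h c * shear_mat n t \<Gamma> c b) = (\<Sum>c<n + m. h c * (if c = b then 1 else 0)) +
     (\<Sum>c<n + m. h c * (if c < n \<and> n \<le> b then t * \<Gamma> c (b - n) else 0))"
    unfolding shear_mat_def by (simp add: algebra_simps sum.distrib)
  also have "(\<Sum>c<n + m. h c * (if c = b then 1 else 0)) = h b"
    using assms by (simp add: sum_mult_delta_right)
  also have "(\<Sum>c<n + m. h c * (if c < n \<and> n \<le> b then t * \<Gamma> c (b - n) else 0))
      = (if n \<le> b then t * (\<Sum>c<n. h c * \<Gamma> c (b - n)) else 0)"
    unfolding sum_lessThan_add_split[of _ n m] by (simp add: sum_distrib_left algebra_simps)
  finally show ?thesis .
qed

text \<open>Back substitution: the lower block rows determine the upper ones.\<close>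
lemma shear_mat_mult_left_cancel:
  assumes eq: "\<And>a. a < n + m \<Longrightarrow> (\<Sum>c<n + m. shear_mat n t \<Gamma> a c * u c) = (\<Sum>c<n + m. shear_mat n t \<Gamma> a c * v c)"
    and "a < n + m"
  shows "u a = v a"
proof -
  have lower: "u a = v a" if "n \<le> a" "a < n + m" for a
    using eq[OF that(2)] that unfolding shear_mat_mult_left[OF that(2)] by simp
  show ?thesis
  proof (cases "n \<le> a")
    case True
    then show ?thesis using lower \<open>a < n + m\<close> by blast
  next
    case False
    have "(\<Sum>c<m. \<Gamma> a c * u (c + n)) = (\<Sum>c<m. \<Gamma> a c * v (c + n))"
      using lower by (intro sum.cong) auto
    then show ?thesis using eq[OF \<open>a < n + m\<close>] False unfolding shear_mat_mult_left[OF \<open>a < n + m\<close>] by simp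
  qed
qed

lemma intertwines_shear_mat_unique:
  assumes "intertwines g (n + m) (n + m) X (shear_mat n t \<Gamma>) Y"
    and "intertwines g (n + m) (n + m) X (shear_mat n t \<Gamma>) Z"
    and "Y \<in> mspace g (n + m)" "Z \<in> mspace g (n + m)"
  shows "Y = Z"
proof (intro ext)
  fix i a b
  show "Y i a b = Z i a b"
  proof (cases "i < g \<and> a < n + m \<and> b < n + m")
    case True
    show ?thesis
      by (rule shear_mat_mult_left_cancel[where t = t and \<Gamma> = \<Gamma> and u = "\<lambda>c. Y i c b" and v = "\<lambda>c. Z i c b"])
        (use assms(1,2) True in \<open>auto simp: intertwines_def\<close>)
  next
    case False
    then show ?thesis using assms(3,4) by (auto simp: mspace_def)
  qed
qed

definition intertwining_defect :: "nat \<Rightarrow> nat \<Rightarrow> mtuple \<Rightarrow> (nat \<Rightarrow> nat \<Rightarrow> complex) \<Rightarrow> mtuple \<Rightarrow> mtuple" where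
  "intertwining_defect n m X \<Gamma> Y = (\<lambda>i a b. (\<Sum>c<n. X i a c * \<Gamma> c b) - (\<Sum>c<m. \<Gamma> a c * Y i c b))"

definition shear_tuple :: "nat \<Rightarrow> nat \<Rightarrow> nat \<Rightarrow> mtuple \<Rightarrow> (nat \<Rightarrow> nat \<Rightarrow> complex) \<Rightarrow> mtuple \<Rightarrow> complex \<Rightarrow> mtuple" where
  "shear_tuple g n m X \<Gamma> Y t = (\<lambda>i j k. dsum n X Y i j k +
     (if i < g \<and> j < n \<and> n \<le> k \<and> k < n + m then t * intertwining_defect n m X \<Gamma> Y i j (k - n) else 0))"

lemma dsum_intertwines_shear_tuple:
  assumes "Y \<in> mspace g m"
  shows "intertwines g (n + m) (n + m) (dsum n X Y) (shear_mat n t \<Gamma>) (shear_tuple g n m X \<Gamma> Y t)"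
  unfolding intertwines_def
proof (intro allI impI)
  fix i a b assume i: "i < g" and a: "a < n + m" and b: "b < n + m"
  have upper: "(\<Sum>c<n. dsum n X Y i a c * \<Gamma> c (b - n)) = (if a < n then (\<Sum>c<n. X i a c * \<Gamma> c (b - n)) else 0)"
    by (auto simp: dsum_def intro!: sum.neutral sum.cong)
  have lower: "(\<Sum>c<m. \<Gamma> a c * shear_tuple g n m X \<Gamma> Y t i (c + n) b) =
      (if n \<le> b then (\<Sum>c<m. \<Gamma> a c * Y i c (b - n)) else 0)"
    using assms by (auto simp: dsum_def shear_tuple_def mspace_def intro!: sum.neutral sum.cong)
  show "(\<Sum>c<n + m. dsum n X Y i a c * shear_mat n t \<Gamma> c b) =
        (\<Sum>c<n + m. shear_mat n t \<Gamma> a c * shear_tuple g n m X \<Gamma> Y t i c b)"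
    unfolding shear_mat_mult_right[OF b] shear_mat_mult_left[OF a] upper lower
    using i a b by (auto simp: shear_tuple_def intertwining_defect_def dsum_def algebra_simps)
qed

lemma shear_tuple_eq_dsum_iff:
  assumes "t \<noteq> 0"
  shows "shear_tuple g n m X \<Gamma> Y t = dsum n X Y \<longleftrightarrow> intertwines g n m X \<Gamma> Y"
proof
  assume eq: "shear_tuple g n m X \<Gamma> Y t = dsum n X Y"
  have "intertwining_defect n m X \<Gamma> Y i a b = 0" if "i < g" "a < n" "b < m" for i a b
    using fun_cong[OF fun_cong[OF fun_cong[OF eq, of i], of a], of "b + n"] that assms
    by (simp add: shear_tuple_def)
  then show "intertwines g n m X \<Gamma> Y"
    by (simp add: intertwines_def intertwining_defect_def)
next
  assume "intertwines g n m X \<Gamma> Y"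
  then show "shear_tuple g n m X \<Gamma> Y t = dsum n X Y"
    by (intro ext) (auto simp: shear_tuple_def intertwining_defect_def intertwines_def)
qed

lemma shear_tuple_mspace:
  "X \<in> mspace g n \<Longrightarrow> Y \<in> mspace g m \<Longrightarrow> shear_tuple g n m X \<Gamma> Y t \<in> mspace g (n + m)"
  by (auto simp: shear_tuple_def mspace_def dsum_def less_diff_conv2 add.commute)

lemma continuous_on_shear_tuple: "continuous_on S (shear_tuple g n m X \<Gamma> Y)"
proof (intro continuous_on_coordinatewise_then_product)
  fix i j k
  show "continuous_on S (\<lambda>t. shear_tuple g n m X \<Gamma> Y t i j k)"
    unfolding shear_tuple_def
    by (cases "i < g \<and> j < n \<and> n \<le> k \<and> k < n + m") (auto intro!: continuous_on_add continuous_on_mult continuous_on_id continuous_on_const)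
qed

lemma shear_tuple_in_openin:
  assumes "openin (top_of_set (mspace g (n + m))) A" and "dsum n X Y \<in> A"
    and "X \<in> mspace g n" "Y \<in> mspace g m"
  obtains t where "t \<noteq> 0" "shear_tuple g n m X \<Gamma> Y t \<in> A"
proof -
  obtain T where T: "open T" "A = mspace g (n + m) \<inter> T"
    using assms(1) by (auto simp: openin_open)
  have "open (shear_tuple g n m X \<Gamma> Y -` T)"
    using continuous_on_shear_tuple T(1) open_vimage by blast
  moreover have "shear_tuple g n m X \<Gamma> Y 0 = dsum n X Y"
    by (intro ext) (simp add: shear_tuple_def)
  then have "0 \<in> shear_tuple g n m X \<Gamma> Y -` T" using assms(2) T(2) by auto
  ultimately obtain e where e: "e > 0" "ball 0 e \<subseteq> shear_tuple g n m X \<Gamma> Y -` T"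
    by (meson open_contains_ball)
  have "complex_of_real (e / 2) \<noteq> 0" "complex_of_real (e / 2) \<in> ball 0 e"
    using e(1) by auto
  then show ?thesis
    using that e(2) T(2) shear_tuple_mspace[OF assms(3,4)] by blast
qed

section \<open>Free maps respect direct sums\<close>

text \<open>The block column inclusions [I; 0] and [0; I], of sizes (n+m) \<times> n and (n+m) \<times> m.\<close>
definition incl_top :: "nat \<Rightarrow> nat \<Rightarrow> complex" where
  "incl_top a b = (if a = b then 1 else 0)"

definition incl_bot :: "nat \<Rightarrow> nat \<Rightarrow> nat \<Rightarrow> complex" where
  "incl_bot n a b = (if a = b + n then 1 else 0)"

lemma sum_incl_top_right: "b < k \<Longrightarrow> (\<Sum>c<k. h c * incl_top c b) = h b"
  by (simp add: incl_top_def sum_mult_delta_right)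

lemma sum_incl_top_left: "(\<Sum>c<k. incl_top a c * h c) = (if a < k then h a else 0)"
  by (simp add: incl_top_def sum_mult_delta_left)

lemma sum_incl_bot_right: "b < m \<Longrightarrow> (\<Sum>c<n + m. h c * incl_bot n c b) = h (b + n)"
  using sum_mult_delta_right[where h = h and A = "{..<n + m}" and b = "b + n"] by (simp add: incl_bot_def)

lemma sum_incl_bot_left: "(\<Sum>c<m. incl_bot n a c * h c) = (if n \<le> a \<and> a < n + m then h (a - n) else 0)"
proof -
  have "(\<Sum>c<m. incl_bot n a c * h c) = (\<Sum>c<m. (if a - n = c \<and> n \<le> a then 1 else 0) * h c)"
    unfolding incl_bot_def by (intro sum.cong) auto
  also have "\<dots> = (if n \<le> a then (\<Sum>c<m. (if a - n = c then 1 else 0) * h c) else 0)"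
    by auto
  finally show ?thesis
    using sum_mult_delta_left[where b = "a - n" and A = "{..<m}" and h = h] by auto
qed

lemma dsum_intertwines_incl_top: "intertwines g (n + m) n (dsum n X Y) incl_top X"
  by (auto simp: intertwines_def sum_incl_top_left sum_incl_top_right dsum_def)

lemma dsum_intertwines_incl_bot: "intertwines g (n + m) m (dsum n X Y) (incl_bot n) Y"
  by (auto simp: intertwines_def sum_incl_bot_left sum_incl_bot_right dsum_def)

lemma eq_dsum_if_intertwines_incl:
  assumes top: "intertwines g (n + m) n Z incl_top X" and bot: "intertwines g (n + m) m Z (incl_bot n) Y"
    and "Z \<in> mspace g (n + m)" "X \<in> mspace g n" "Y \<in> mspace g m"
  shows "Z = dsum n X Y"
proof (intro ext)
  fix i a b
  have left_cols: "Z i a b = (if a < n then X i a b else 0)" if "i < g" "a < n + m" "b < n" for b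
    using top that unfolding intertwines_def by (simp add: sum_incl_top_left sum_incl_top_right)
  have right_cols: "Z i a (b + n) = (if n \<le> a then Y i (a - n) b else 0)" if "i < g" "a < n + m" "b < m" for b
    using bot that unfolding intertwines_def by (simp add: sum_incl_bot_left sum_incl_bot_right)
  show "Z i a b = dsum n X Y i a b"
  proof (cases "i < g \<and> a < n + m \<and> b < n + m")
    case True
    show ?thesis
    proof (cases "b < n")
      case True
      then show ?thesis using left_cols[of b] \<open>i < g \<and> a < n + m \<and> b < n + m\<close>
        by (auto simp: dsum_def)
    next
      case False
      then obtain b' where "b = b' + n" by (metis add.commute le_Suc_ex not_less)
      then show ?thesis using right_cols[of b'] \<open>i < g \<and> a < n + m \<and> b < n + m\<close> assms(4)
        by (auto simp: dsum_def mspace_def)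
    qed
  next
    case False
    then show ?thesis using assms(3-5) by (auto simp: dsum_def mspace_def less_diff_conv2 add.commute)
  qed
qed

lemma free_map_dsum:
  assumes "nc_set g U" "nc_set g V" and f: "free_map g U V f"
    and "n > 0" "m > 0" "X \<in> U n" "Y \<in> U m"
  shows "f (n + m) (dsum n X Y) = dsum n (f n X) (f m Y)"
proof -
  have XY: "dsum n X Y \<in> U (n + m)" using nc_set_dsum assms(1,4-7) .
  have nm: "n + m > 0" using assms(4) by simp
  have in_mspace: "f k Z \<in> mspace g k" if "k > 0" "Z \<in> U k" for k Z
    using free_map_into[OF f that] nc_set_subset_mspace[OF assms(2) that(1)] by blast
  show ?thesis
  proof (rule eq_dsum_if_intertwines_incl)
    show "intertwines g (n + m) n (f (n + m) (dsum n X Y)) incl_top (f n X)"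
      using free_map_intertwines[OF f nm assms(4) XY assms(6) dsum_intertwines_incl_top] .
    show "intertwines g (n + m) m (f (n + m) (dsum n X Y)) (incl_bot n) (f m Y)"
      using free_map_intertwines[OF f nm assms(5) XY assms(7) dsum_intertwines_incl_bot] .
  qed (use in_mspace[OF nm XY] in_mspace[OF assms(4,6)] in_mspace[OF assms(5,7)] in simp_all)
qed

section \<open>The inverse of a bijective free map is free\<close>

lemma free_map_reflects_intertwines:
  assumes U: "nc_set g U" "openin (top_of_set (mspace g (n + m))) (U (n + m))"
    and V: "nc_set g V" and f: "free_map g U V f" and inj: "inj_on (f (n + m)) (U (n + m))"
    and n: "n > 0" and m: "m > 0" and X: "X \<in> U n" and Y: "Y \<in> U m"
    and fXY: "intertwines g n m (f n X) \<Gamma> (f m Y)"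
  shows "intertwines g n m X \<Gamma> Y"
proof -
  have XY: "dsum n X Y \<in> U (n + m)" using nc_set_dsum U(1) n m X Y .
  have nm: "n + m > 0" using n by simp
  have XM: "X \<in> mspace g n" and YM: "Y \<in> mspace g m"
    using nc_set_subset_mspace[OF U(1) n] nc_set_subset_mspace[OF U(1) m] X Y by blast+
  have fM: "f k Z \<in> mspace g k" if "k > 0" "Z \<in> U k" for k Z
    using free_map_into[OF f that] nc_set_subset_mspace[OF V that(1)] by blast
  obtain t where t: "t \<noteq> 0" and W: "shear_tuple g n m X \<Gamma> Y t \<in> U (n + m)"
    using shear_tuple_in_openin[OF U(2) XY XM YM] .
  have fXY_dsum: "f (n + m) (dsum n X Y) = dsum n (f n X) (f m Y)"
    using free_map_dsum[OF U(1) V f n m X Y] .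
  have "intertwines g (n + m) (n + m) (f (n + m) (dsum n X Y)) (shear_mat n t \<Gamma>) (f (n + m) (shear_tuple g n m X \<Gamma> Y t))"
    using free_map_intertwines[OF f nm nm XY W dsum_intertwines_shear_tuple[OF YM]] .
  then have image_shear: "intertwines g (n + m) (n + m) (dsum n (f n X) (f m Y)) (shear_mat n t \<Gamma>)
      (f (n + m) (shear_tuple g n m X \<Gamma> Y t))"
    by (simp only: fXY_dsum)
  have "shear_tuple g n m (f n X) \<Gamma> (f m Y) t = dsum n (f n X) (f m Y)"
    using shear_tuple_eq_dsum_iff[OF t] fXY by blast
  then have image_self: "intertwines g (n + m) (n + m) (dsum n (f n X) (f m Y)) (shear_mat n t \<Gamma>)
      (dsum n (f n X) (f m Y))"
    using dsum_intertwines_shear_tuple[OF fM[OF m Y], where n = n and X = "f n X" and t = t and \<Gamma> = \<Gamma>] by simp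
  have "f (n + m) (shear_tuple g n m X \<Gamma> Y t) = f (n + m) (dsum n X Y)"
    using intertwines_shear_mat_unique[OF image_shear image_self fM[OF nm W]] fM[OF nm XY]
    by (simp add: fXY_dsum)
  then have "shear_tuple g n m X \<Gamma> Y t = dsum n X Y"
    using inj W XY by (simp add: inj_on_eq_iff)
  then show ?thesis using shear_tuple_eq_dsum_iff[OF t] by blast
qed

lemma free_map_inv_into:
  assumes U: "nc_set g U" "\<forall>n>0. openin (top_of_set (mspace g n)) (U n)"
    and V: "nc_set g V" and f: "free_map g U V f" and bij: "\<forall>n>0. bij_betw (f n) (U n) (V n)"
  shows "free_map g V U (\<lambda>n. inv_into (U n) (f n))"
proof -
  have inv: "f k (inv_into (U k) (f k) Z) = Z" "inv_into (U k) (f k) Z \<in> U k"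
    if "k > 0" "Z \<in> V k" for k Z
    using bij_betw_inv_into_right[of "f k" "U k" "V k" Z] bij_betw_apply[OF bij_betw_inv_into, of "f k" "U k" "V k" Z]
      bij that by simp_all
  have reflect: "intertwines g n m (inv_into (U n) (f n) X) \<Gamma> (inv_into (U m) (f m) Y)"
    if n: "n > 0" and m: "m > 0" and X: "X \<in> V n" and Y: "Y \<in> V m" and XY: "intertwines g n m X \<Gamma> Y"
    for n m X Y \<Gamma>
  proof (rule free_map_reflects_intertwines[OF U(1) _ V f _ n m inv(2)[OF n X] inv(2)[OF m Y]])
    have "n + m > 0" using n by simp
    then show "openin (top_of_set (mspace g (n + m))) (U (n + m))" "inj_on (f (n + m)) (U (n + m))"
      using U(2) bij_betw_imp_inj_on[of "f (n + m)" "U (n + m)" "V (n + m)"] bij by simp_all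
    show "intertwines g n m (f n (inv_into (U n) (f n) X)) \<Gamma> (f m (inv_into (U m) (f m) Y))"
      using XY by (simp only: inv(1)[OF n X] inv(1)[OF m Y])
  qed
  show ?thesis
    unfolding free_map_def using inv(2) reflect by simp
qed

section \<open>Holomorphic maps are continuous\<close>

lemma continuous_on_mtuple_entry: "continuous_on S (\<lambda>Y::mtuple. Y i j k)"
  using continuous_on_product_then_coordinatewise[of S "\<lambda>Y::mtuple. Y i j", OF
      continuous_on_product_then_coordinatewise[of S "\<lambda>Y::mtuple. Y i", OF
        continuous_on_product_then_coordinatewise[OF continuous_on_id]]] .

lemma tendsto_mtuple_entry: "((\<lambda>Y::mtuple. Y i j k) \<longlongrightarrow> X i j k) (at X within S)"
  using continuous_on_mtuple_entry[of UNIV i j k]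
  by (auto simp: continuous_on_def intro: tendsto_within_subset)

lemma norm_entry_le_mnorm:
  assumes "i < g" "j < n" "k < n"
  shows "cmod (Z i j k) \<le> mnorm g n Z"
proof -
  have "(cmod (Z i j k))\<^sup>2 \<le> (\<Sum>k'<n. (cmod (Z i j k'))\<^sup>2)"
    using assms by (intro member_le_sum) auto
  also have "\<dots> \<le> (\<Sum>j'<n. \<Sum>k'<n. (cmod (Z i j' k'))\<^sup>2)"
    using assms by (intro member_le_sum[where f = "\<lambda>j'. \<Sum>k'<n. (cmod (Z i j' k'))\<^sup>2"]) (auto intro!: sum_nonneg)
  also have "\<dots> \<le> (\<Sum>i'<g. \<Sum>j'<n. \<Sum>k'<n. (cmod (Z i' j' k'))\<^sup>2)"
    using assms by (intro member_le_sum[where f = "\<lambda>i'. \<Sum>j'<n. \<Sum>k'<n. (cmod (Z i' j' k'))\<^sup>2"]) (auto intro!: sum_nonneg)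
  finally have "sqrt ((cmod (Z i j k))\<^sup>2) \<le> mnorm g n Z"
    unfolding mnorm_def by (rule real_sqrt_le_mono)
  then show ?thesis by simp
qed

lemma mnorm_mdiff_pos:
  assumes "X \<in> mspace g n" "Y \<in> mspace g n" "Y \<noteq> X"
  shows "mnorm g n (mdiff Y X) > 0"
proof -
  obtain i j k where ne: "Y i j k \<noteq> X i j k" using assms(3) by blast
  have "i < g \<and> j < n \<and> k < n"
  proof (rule ccontr)
    assume "\<not> (i < g \<and> j < n \<and> k < n)"
    then have "Y i j k = 0" "X i j k = 0" using assms(1,2) unfolding mspace_def by simp_all
    then show False using ne by simp
  qed
  then have "cmod (mdiff Y X i j k) \<le> mnorm g n (mdiff Y X)"
    using norm_entry_le_mnorm by blast
  moreover have "0 < cmod (mdiff Y X i j k)" using ne by (simp add: mdiff_def)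
  ultimately show ?thesis by linarith
qed

lemma tendsto_mnorm_mdiff: "((\<lambda>Y. mnorm g n (mdiff Y X)) \<longlongrightarrow> 0) (at X within S)"
proof -
  have "((\<lambda>Y. mnorm g n (mdiff Y X)) \<longlongrightarrow> mnorm g n (mdiff X X)) (at X within S)"
    unfolding mnorm_def mdiff_def by (intro tendsto_intros tendsto_mtuple_entry)
  then show ?thesis by (simp add: mnorm_def mdiff_def)
qed

definition matrix_unit :: "nat \<Rightarrow> nat \<Rightarrow> nat \<Rightarrow> mtuple" where
  "matrix_unit a b c = (\<lambda>i j k. if (i, j, k) = (a, b, c) then 1 else 0)"

lemma mclinear_zero:
  assumes "mclinear g n L"
  shows "L (\<lambda>_ _ _. 0) = (\<lambda>_ _ _. 0)"
proof -
  have "(\<lambda>_ _ _. 0) \<in> mspace g n" by (simp add: mspace_def)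
  then have "L (\<lambda>i j k. (-1) * 0 + 0) = (\<lambda>i j k. (-1) * L (\<lambda>_ _ _. 0) i j k + L (\<lambda>_ _ _. 0) i j k)"
    using assms unfolding mclinear_def by blast
  then show ?thesis by simp
qed

lemma mclinear_expansion:
  assumes L: "mclinear g n L" and Z: "Z \<in> mspace g n"
  shows "L Z = (\<lambda>i j k. \<Sum>(a, b, c)\<in>{..<g} \<times> {..<n} \<times> {..<n}. Z a b c * L (matrix_unit a b c) i j k)"
proof -
  define restr where "restr A = (\<lambda>a b c. if (a, b, c) \<in> A then Z a b c else 0)" for A
  have "L (restr A) = (\<lambda>i j k. \<Sum>(a, b, c)\<in>A. Z a b c * L (matrix_unit a b c) i j k)"
    if "finite A" "A \<subseteq> {..<g} \<times> {..<n} \<times> {..<n}" for A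
    using that
  proof (induction A rule: finite_induct)
    case empty
    then show ?case using mclinear_zero[OF L] by (simp add: restr_def)
  next
    case (insert p A)
    obtain a b c where p: "p = (a, b, c)" by (metis prod_cases3)
    have "matrix_unit a b c \<in> mspace g n" "restr A \<in> mspace g n"
      using insert.prems Z by (auto simp: matrix_unit_def mspace_def restr_def p)
    then have "L (\<lambda>i j k. Z a b c * matrix_unit a b c i j k + restr A i j k) =
        (\<lambda>i j k. Z a b c * L (matrix_unit a b c) i j k + L (restr A) i j k)"
      using L unfolding mclinear_def by blast
    moreover have "restr (insert p A) = (\<lambda>i j k. Z a b c * matrix_unit a b c i j k + restr A i j k)"
      using insert.hyps by (intro ext) (auto simp: restr_def matrix_unit_def p)
    ultimately show ?case using insert by (simp add: p)
  qed
  moreover have "restr ({..<g} \<times> {..<n} \<times> {..<n}) = Z"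
    using Z by (intro ext) (auto simp: restr_def mspace_def)
  ultimately show ?thesis by force
qed

lemma tendsto_mclinear_mdiff:
  assumes L: "mclinear g n L" and X: "X \<in> mspace g n" and S: "S \<subseteq> mspace g n"
  shows "((\<lambda>Y. L (mdiff Y X) i j k) \<longlongrightarrow> 0) (at X within S)"
proof -
  let ?B = "{..<g} \<times> {..<n} \<times> {..<n}"
  have "((\<lambda>Y. \<Sum>(a, b, c)\<in>?B. mdiff Y X a b c * L (matrix_unit a b c) i j k) \<longlongrightarrow>
      (\<Sum>(a, b, c)\<in>?B. mdiff X X a b c * L (matrix_unit a b c) i j k)) (at X within S)"
    unfolding mdiff_def split_def by (intro tendsto_intros tendsto_mtuple_entry)
  moreover have "mdiff Y X \<in> mspace g n" if "Y \<in> S" for Y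
    using that S X by (auto simp: mspace_def mdiff_def)
  then have "eventually (\<lambda>Y. (\<Sum>(a, b, c)\<in>?B. mdiff Y X a b c * L (matrix_unit a b c) i j k) =
      L (mdiff Y X) i j k) (at X within S)"
    using mclinear_expansion[OF L] by (auto simp: eventually_at_filter)
  ultimately show ?thesis
    by (auto simp: mdiff_def elim: Lim_transform_eventually)
qed

lemma tendsto_entry_of_mnorm_ratio:
  assumes X: "X \<in> mspace g n" and S: "S \<subseteq> mspace g n" and ijk: "i < g" "j < n" "k < n"
    and ratio: "((\<lambda>Y. mnorm g n (R Y) / mnorm g n (mdiff Y X)) \<longlongrightarrow> 0) (at X within S)"
  shows "((\<lambda>Y. R Y i j k) \<longlongrightarrow> 0) (at X within S)"
proof (rule Lim_null_comparison)
  show "eventually (\<lambda>Y. norm (R Y i j k) \<le> mnorm g n (R Y) / mnorm g n (mdiff Y X) * mnorm g n (mdiff Y X))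
      (at X within S)"
    unfolding eventually_at_filter
  proof (intro always_eventually allI impI)
    fix Y assume "Y \<noteq> X" "Y \<in> S"
    then have "mnorm g n (mdiff Y X) > 0" using mnorm_mdiff_pos[OF X] S by blast
    then show "norm (R Y i j k) \<le> mnorm g n (R Y) / mnorm g n (mdiff Y X) * mnorm g n (mdiff Y X)"
      using norm_entry_le_mnorm[OF ijk] by simp
  qed
  show "((\<lambda>Y. mnorm g n (R Y) / mnorm g n (mdiff Y X) * mnorm g n (mdiff Y X)) \<longlongrightarrow> 0) (at X within S)"
    using tendsto_mult[OF ratio tendsto_mnorm_mdiff[of g n X S]] by simp
qed

lemma mholo_on_imp_continuous_on:
  assumes S: "S \<subseteq> mspace g n" and H: "mholo_on g n F S"
  shows "continuous_on S F"
proof (intro continuous_on_coordinatewise_then_product)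
  fix i j k
  show "continuous_on S (\<lambda>Y. F Y i j k)"
  proof (cases "i < g \<and> j < n \<and> k < n")
    case False
    have "F Y i j k = 0" if "Y \<in> S" for Y
      using H that False unfolding mholo_on_def mspace_def by blast
    then show ?thesis
      using continuous_on_eq[OF continuous_on_const] by metis
  next
    case True
    show ?thesis unfolding continuous_on_def
    proof
      fix X assume XS: "X \<in> S"
      then obtain L where L: "mclinear g n L" and lim:
        "((\<lambda>Y. mnorm g n (mdiff (mdiff (F Y) (F X)) (L (mdiff Y X))) / mnorm g n (mdiff Y X)) \<longlongrightarrow> 0) (at X within S)"
        using H unfolding mholo_on_def by blast
      have XM: "X \<in> mspace g n" using XS S by auto
      have "((\<lambda>Y. F X i j k + mdiff (mdiff (F Y) (F X)) (L (mdiff Y X)) i j k + L (mdiff Y X) i j k)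
          \<longlongrightarrow> F X i j k + 0 + 0) (at X within S)"
        using True by (intro tendsto_intros tendsto_entry_of_mnorm_ratio[OF XM S _ _ _ lim]
            tendsto_mclinear_mdiff[OF L XM S]) simp_all
      then show "((\<lambda>Y. F Y i j k) \<longlongrightarrow> F X i j k) (at X within S)"
        by (simp add: mdiff_def)
    qed
  qed
qed

section \<open>Properness\<close>

lemma proper_on_if_continuous_inverse:
  assumes left: "\<And>x. x \<in> A \<Longrightarrow> G (F x) = x" and right: "\<And>y. y \<in> B \<Longrightarrow> G y \<in> A \<and> F (G y) = y"
    and cont: "continuous_on B G"
  shows "proper_on A B F"
  unfolding proper_on_def
proof (intro allI impI)
  fix K assume K: "K \<subseteq> B" "compact K"
  then have "compact (G ` K)"
    using compact_continuous_image continuous_on_subset[OF cont] by blast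
  moreover have "{x \<in> A. F x \<in> K} = G ` K"
  proof
    show "{x \<in> A. F x \<in> K} \<subseteq> G ` K"
      using left by (force simp: image_iff)
    show "G ` K \<subseteq> {x \<in> A. F x \<in> K}"
      using right K(1) by auto
  qed
  ultimately show "compact {x \<in> A. F x \<in> K}" by simp
qed

lemma bianalytic_on_proper:
  assumes "bianalytic_on g n A B F" "A \<subseteq> mspace g n" "B \<subseteq> mspace g n"
  shows "proper_on A B F" "proper_on B A (inv_into A F)"
proof -
  have bij: "bij_betw F A B" and "mholo_on g n F A" "mholo_on g n (inv_into A F) B"
    using assms(1) unfolding bianalytic_on_def by simp_all
  then have cont: "continuous_on A F" "continuous_on B (inv_into A F)"
    using mholo_on_imp_continuous_on assms(2,3) by simp_all
  have left_inv: "inv_into A F (F x) = x" "F x \<in> B" if "x \<in> A" for x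
    using bij_betw_inv_into_left[OF bij that] bij_betw_apply[OF bij that] by simp_all
  have right_inv: "F (inv_into A F y) = y" "inv_into A F y \<in> A" if "y \<in> B" for y
    using bij_betw_inv_into_right[OF bij that] bij_betw_apply[OF bij_betw_inv_into[OF bij] that] by simp_all
  show "proper_on A B F"
    by (rule proper_on_if_continuous_inverse[where G = "inv_into A F"]) (simp_all add: left_inv right_inv cont)
  show "proper_on B A (inv_into A F)"
    by (rule proper_on_if_continuous_inverse[where G = F]) (simp_all add: left_inv right_inv cont)
qed

theorem corollary3p2:
  fixes g :: nat and U V :: "nat \<Rightarrow> mtuple set" and f :: "nat \<Rightarrow> mtuple \<Rightarrow> mtuple"
  assumes "nc_domain g U" and "nc_domain g V"
    and "free_map g U V f"
    and "\<forall>n>0. bianalytic_on g n (U n) (V n) (f n)"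
  shows "proper_analytic_free_map g U V f \<and>
         proper_analytic_free_map g V U (\<lambda>n. inv_into (U n) (f n))"
proof -
  have U: "nc_set g U" "\<forall>n>0. openin (top_of_set (mspace g n)) (U n)" and V: "nc_set g V"
    using assms(1,2) unfolding nc_domain_def by simp_all
  have "free_map g V U (\<lambda>n. inv_into (U n) (f n))"
    using free_map_inv_into[OF U V assms(3)] assms(4) by (simp add: bianalytic_on_def)
  moreover have "proper_on (U n) (V n) (f n)" "proper_on (V n) (U n) (inv_into (U n) (f n))"
    if "n > 0" for n
    using bianalytic_on_proper[of g n "U n" "V n" "f n"] assms(4) nc_set_subset_mspace[OF U(1) that]
      nc_set_subset_mspace[OF V that] that by simp_all
  ultimately show ?thesis
    using assms(3,4)
    by (simp add: proper_analytic_free_map_def analytic_free_map_def bianalytic_on_def)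
qed

end
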